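(* Let $(\Gamma,M)$ be an E-GCM graph on $n\ge3$ nodes whose underlying graph $\Gamma$ is a loop (the nodes can be numbered $\gamma_1,\dots,\gamma_n$ so that each $\gamma_i$ is adjacent exactly to $\gamma_{i-1}$ and $\gamma_{i+1}$, indices mod $n$), and such that $M_{ij}M_{ji}=1$ for every pair of adjacent nodes. Then $(\Gamma,M)$ is not admissible.
   Context: E-GCM $M=(M_{ij})_{i,j\in I_n}$: real, $M_{ii}=2$, $M_{ij}\le0$ ($i\ne j$), $M_{ij}\ne0\iff M_{ji}\ne0$, nonzero $M_{ij}M_{ji}$ either $\ge4$ or $=4\cos^2(\pi/m)$ with $m\ge3$ integer; E-GCM graph: nodes $\gamma_i$, adjacent iff $M_{ij}\ne0$. Positions $\lambda\in\mathbb{R}^n$; firing $\gamma_i$ (allowed iff $\lambda_i>0$) replaces $\lambda_j$ by $\lambda_j-M_{ij}\lambda_i$. Numbers game: fire nodes with positive population while any exist; a game sequence is convergent if finite. A connected E-GCM graph is admissible if some nonzero position with all $\lambda_i\ge0$ has a convergent game sequence. *)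

theory Defs
  imports Complex_Main
begin

text \<open>Nodes are indexed by 0..<n; the matrix is M :: nat => nat => real, and a
position is lam :: nat => real (only values at indices < n matter).\<close>

definition is_egcm :: "nat \<Rightarrow> (nat \<Rightarrow> nat \<Rightarrow> real) \<Rightarrow> bool" where
  "is_egcm n M \<longleftrightarrow>
     (\<forall>i<n. M i i = 2) \<and>
     (\<forall>i<n. \<forall>j<n. i \<noteq> j \<longrightarrow> M i j \<le> 0) \<and>
     (\<forall>i<n. \<forall>j<n. M i j \<noteq> 0 \<longleftrightarrow> M j i \<noteq> 0) \<and>
     (\<forall>i<n. \<forall>j<n. i \<noteq> j \<longrightarrow> M i j * M j i \<noteq> 0 \<longrightarrow>
        (M i j * M j i \<ge> 4 \<or>
         (\<exists>m::nat. m \<ge> 3 \<and> M i j * M j i = 4 * (cos (pi / real m))\<^sup>2)))"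

definition egcm_adj :: "nat \<Rightarrow> (nat \<Rightarrow> nat \<Rightarrow> real) \<Rightarrow> nat \<Rightarrow> nat \<Rightarrow> bool" where
  "egcm_adj n M i j \<longleftrightarrow> i < n \<and> j < n \<and> i \<noteq> j \<and> M i j \<noteq> 0"

definition fire :: "nat \<Rightarrow> (nat \<Rightarrow> nat \<Rightarrow> real) \<Rightarrow> nat \<Rightarrow> (nat \<Rightarrow> real) \<Rightarrow> (nat \<Rightarrow> real)" where
  "fire n M i lam = (\<lambda>j. if j < n then lam j - M i j * lam i else lam j)"

fun play :: "nat \<Rightarrow> (nat \<Rightarrow> nat \<Rightarrow> real) \<Rightarrow> (nat \<Rightarrow> real) \<Rightarrow> nat list \<Rightarrow> (nat \<Rightarrow> real)" where
  "play n M lam [] = lam"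
| "play n M lam (i # is) = play n M (fire n M i lam) is"

fun legal_seq :: "nat \<Rightarrow> (nat \<Rightarrow> nat \<Rightarrow> real) \<Rightarrow> (nat \<Rightarrow> real) \<Rightarrow> nat list \<Rightarrow> bool" where
  "legal_seq n M lam [] = True"
| "legal_seq n M lam (i # is) = (i < n \<and> lam i > 0 \<and> legal_seq n M (fire n M i lam) is)"

definition convergent_game_seq :: "nat \<Rightarrow> (nat \<Rightarrow> nat \<Rightarrow> real) \<Rightarrow> (nat \<Rightarrow> real) \<Rightarrow> nat list \<Rightarrow> bool" where
  "convergent_game_seq n M lam s \<longleftrightarrow>
     legal_seq n M lam s \<and> (\<forall>j<n. play n M lam s j \<le> 0)"

definition admissible :: "nat \<Rightarrow> (nat \<Rightarrow> nat \<Rightarrow> real) \<Rightarrow> bool" where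
  "admissible n M \<longleftrightarrow>
     (\<exists>lam. (\<forall>i<n. lam i \<ge> 0) \<and> (\<exists>i<n. lam i \<noteq> 0) \<and>
            (\<exists>s. convergent_game_seq n M lam s))"

end

theory Submission
  imports Defs
begin

text \<open>If some vector \<open>v\<close> with positive entries satisfies \<open>M v \<le> 0\<close> row by row, then firing a
node \<open>i\<close> changes the weighted population \<open>\<Sum>j. v j * \<lambda> j\<close> by \<open>-\<lambda> i * (M v) i \<ge> 0\<close>. So along a
legal game this quantity never decreases; it starts positive for a nonzero nonnegative position
and would end nonpositive for a terminal one, so no game converges. On a loop whose edges have
\<open>M\<^sub>i\<^sub>j M\<^sub>j\<^sub>i = 1\<close>, such a \<open>v\<close> exists: with \<open>c\<^sub>p = -M\<^sub>p\<^sub>,\<^sub>p\<^sub>+\<^sub>1\<close> and \<open>r\<close> the \<open>n\<close>-th root of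
\<open>c\<^sub>0 \<cdots> c\<^sub>n\<^sub>-\<^sub>1\<close>, the weights \<open>v\<^sub>k = r\<^sup>k / (c\<^sub>0 \<cdots> c\<^sub>k\<^sub>-\<^sub>1)\<close> close up around the loop and give
\<open>(M v)\<^sub>p = (2 - r - 1/r) v\<^sub>p = -(r - 1)\<^sup>2 v\<^sub>p / r \<le> 0\<close>.\<close>

lemma weighted_sum_fire:
  assumes "i < n"
  shows "(\<Sum>j<n. v j * fire n M i lam j) = (\<Sum>j<n. v j * lam j) - lam i * (\<Sum>j<n. M i j * v j)"
  by (simp add: fire_def algebra_simps sum_subtractf sum_distrib_left)

lemma weighted_sum_play_mono:
  assumes row_nonpos: "\<And>i. i < n \<Longrightarrow> (\<Sum>j<n. M i j * v j) \<le> 0"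
    and "legal_seq n M lam s"
  shows "(\<Sum>j<n. v j * lam j) \<le> (\<Sum>j<n. v j * play n M lam s j)"
  using assms(2)
proof (induction s arbitrary: lam)
  case Nil
  then show ?case by simp
next
  case (Cons i s)
  then have i: "i < n" "lam i > 0" and legal: "legal_seq n M (fire n M i lam) s" by auto
  have "(\<Sum>j<n. v j * lam j) \<le> (\<Sum>j<n. v j * fire n M i lam j)"
    using weighted_sum_fire[OF i(1)] row_nonpos[OF i(1)] i(2) by (simp add: mult_nonneg_nonpos)
  also have "\<dots> \<le> (\<Sum>j<n. v j * play n M (fire n M i lam) s j)"
    using Cons.IH[OF legal] .
  finally show ?case by simp
qed

lemma not_admissible_if_pos_vector:
  assumes pos: "\<And>i. i < n \<Longrightarrow> v i > 0"
    and row_nonpos: "\<And>i. i < n \<Longrightarrow> (\<Sum>j<n. M i j * v j) \<le> 0"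
  shows "\<not> admissible n M"
proof
  assume "admissible n M"
  then obtain lam s i0 where nonneg: "\<forall>i<n. lam i \<ge> 0" and i0: "i0 < n" "lam i0 \<noteq> 0"
    and conv: "convergent_game_seq n M lam s"
    unfolding admissible_def by blast
  have "0 < v i0 * lam i0"
    using pos nonneg i0 by (simp add: less_le)
  also have "\<dots> \<le> (\<Sum>j<n. v j * lam j)"
    using i0 pos nonneg by (intro member_le_sum) (auto simp: less_imp_le)
  also have "\<dots> \<le> (\<Sum>j<n. v j * play n M lam s j)"
    using weighted_sum_play_mono[of n M v lam s] row_nonpos conv
    unfolding convergent_game_seq_def by blast
  also have "\<dots> \<le> 0"
    using conv pos unfolding convergent_game_seq_def
    by (intro sum_nonpos) (simp add: mult_nonneg_nonpos less_imp_le)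
  finally show False by simp
qed

lemma not_admissible_if_pos_vector_relabelled:
  assumes bij: "bij_betw \<sigma> {..<n} {..<n}"
    and pos: "\<And>k. k < n \<Longrightarrow> w k > 0"
    and row_nonpos: "\<And>p. p < n \<Longrightarrow> (\<Sum>k<n. M (\<sigma> p) (\<sigma> k) * w k) \<le> 0"
  shows "\<not> admissible n M"
proof (rule not_admissible_if_pos_vector)
  let ?\<tau> = "inv_into {..<n} \<sigma>"
  have \<tau>: "?\<tau> i < n" "\<sigma> (?\<tau> i) = i" if "i < n" for i
    using bij_betwE[OF bij_betw_inv_into[OF bij]] bij_betw_inv_into_right[OF bij] that by auto
  have "?\<tau> (\<sigma> k) = k" if "k < n" for k
    using bij that by (simp add: bij_betw_inv_into_left)
  then have "(\<Sum>j<n. M i j * w (?\<tau> j)) = (\<Sum>k<n. M i (\<sigma> k) * w k)" for i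
    using sum.reindex_bij_betw[OF bij, of "\<lambda>j. M i j * w (?\<tau> j)"] by simp
  then show "(\<Sum>j<n. M i j * w (?\<tau> j)) \<le> 0" if "i < n" for i
    using row_nonpos[of "?\<tau> i"] \<tau>[OF that] by simp
  show "w (?\<tau> i) > 0" if "i < n" for i
    using pos \<tau>[OF that] by simp
qed

lemma loop_weights:
  fixes c :: "nat \<Rightarrow> real"
  assumes "n > 0" and c_pos: "\<And>p. p < n \<Longrightarrow> c p > 0"
  obtains r w where "r > 0" "\<And>k. k < n \<Longrightarrow> w k > 0"
    "\<And>p. p < n \<Longrightarrow> c p * w (Suc p mod n) = r * w p"
proof
  define r where "r = root n (prod c {..<n})"
  define w where "w k = r ^ k / prod c {..<k}" for k
  have prod_pos: "prod c {..<k} > 0" if "k \<le> n" for k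
    using c_pos that by (intro prod_pos) auto
  show r_pos: "r > 0"
    using prod_pos[of n] \<open>n > 0\<close> unfolding r_def by simp
  show "w k > 0" if "k < n" for k
    using r_pos prod_pos[of k] that unfolding w_def by simp
  show "c p * w (Suc p mod n) = r * w p" if p: "p < n" for p
  proof (cases "Suc p < n")
    case True
    then show ?thesis
      using prod_pos[of p] c_pos[OF p] p unfolding w_def by (simp add: field_simps)
  next
    case False
    then have n: "n = Suc p" using p by simp
    have "r * r ^ p = prod c {..<p} * c p"
      using prod_pos[of n] \<open>n > 0\<close> unfolding r_def n by (simp flip: power_Suc)
    then have "r * w p = c p"
      using prod_pos[of p] n unfolding w_def by (simp add: divide_eq_eq del: prod_zero_iff)
    then show ?thesis
      using n unfolding w_def by simp
  qed
qed

lemma Suc_mod_eq_iff: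
  fixes k p n :: nat
  assumes "k < n" and "p < n"
  shows "Suc k mod n = p \<longleftrightarrow> k = (p + n - 1) mod n"
proof (cases p)
  case 0
  then show ?thesis
    using assms by (auto simp: mod_Suc)
next
  case (Suc p')
  then have "(p + n - 1) mod n = p'"
    using assms by simp
  then show ?thesis
    using assms Suc by (auto simp: mod_Suc)
qed

lemma sum_loop_neighbours:
  fixes f :: "nat \<Rightarrow> 'a::comm_monoid_add"
  assumes "n \<ge> 3" and "p < n"
    and support: "\<And>k. k < n \<Longrightarrow> f k \<noteq> 0 \<Longrightarrow> k = p \<or> k = Suc p mod n \<or> p = Suc k mod n"
  shows "(\<Sum>k<n. f k) = f p + f (Suc p mod n) + f ((p + n - 1) mod n)"
proof -
  let ?q = "Suc p mod n" and ?pd = "(p + n - 1) mod n"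
  have pd: "p = Suc k mod n \<longleftrightarrow> k = ?pd" if "k < n" for k
    using Suc_mod_eq_iff[OF that \<open>p < n\<close>] by auto
  have distinct: "?q \<noteq> p" "?pd \<noteq> p" "?pd \<noteq> ?q"
    using assms(1,2) pd[of p] pd[of ?q] by (auto simp: mod_Suc split: if_splits)
  have "(\<Sum>k<n. f k) = (\<Sum>k\<in>{p, ?q, ?pd}. f k)"
    using support pd \<open>p < n\<close> by (intro sum.mono_neutral_right) auto
  also have "\<dots> = f p + f ?q + f ?pd"
    using distinct by (simp add: add.assoc)
  finally show ?thesis .
qed

lemma loop_pos_vector:
  fixes A :: "nat \<Rightarrow> nat \<Rightarrow> real"
  assumes "n \<ge> 3"
    and diag: "\<And>p. p < n \<Longrightarrow> A p p = 2"
    and edge_neg: "\<And>p. p < n \<Longrightarrow> A p (Suc p mod n) < 0"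
    and edge_prod: "\<And>p. p < n \<Longrightarrow> A p (Suc p mod n) * A (Suc p mod n) p = 1"
    and support: "\<And>p k. p < n \<Longrightarrow> k < n \<Longrightarrow> A p k \<noteq> 0 \<Longrightarrow>
                     k = p \<or> k = Suc p mod n \<or> p = Suc k mod n"
  obtains w where "\<And>k. k < n \<Longrightarrow> w k > 0" "\<And>p. p < n \<Longrightarrow> (\<Sum>k<n. A p k * w k) \<le> 0"
proof -
  define c where "c p = - A p (Suc p mod n)" for p
  have c_pos: "c p > 0" and reverse_edge: "A (Suc p mod n) p = - 1 / c p" if "p < n" for p
    using edge_neg[OF that] edge_prod[OF that] unfolding c_def by (auto simp: field_simps)
  obtain r w where r: "r > 0" and w: "\<And>k. k < n \<Longrightarrow> w k > 0"
    and shift: "\<And>p. p < n \<Longrightarrow> c p * w (Suc p mod n) = r * w p"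
    using loop_weights[of n c] c_pos \<open>n \<ge> 3\<close> by auto
  have "(\<Sum>k<n. A p k * w k) \<le> 0" if p: "p < n" for p
  proof -
    let ?pd = "(p + n - 1) mod n"
    have pd: "?pd < n" "Suc ?pd mod n = p"
      using p Suc_mod_eq_iff[of ?pd n p] by auto
    have "w ?pd / c ?pd = w p / r"
      using shift[OF pd(1)] c_pos[OF pd(1)] pd(2) r by (simp add: field_simps)
    then have "(\<Sum>k<n. A p k * w k) = 2 * w p - r * w p - w p / r"
      using sum_loop_neighbours[OF \<open>n \<ge> 3\<close> p, of "\<lambda>k. A p k * w k"] support[OF p]
        diag[OF p] shift[OF p] reverse_edge[OF pd(1)] pd(2)
      by (auto simp: c_def)
    also have "\<dots> = - w p * (r - 1)\<^sup>2 / r"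
      using r by (simp add: field_simps power2_eq_square)
    also have "\<dots> \<le> 0"
      using r w[OF p] by (simp add: divide_nonpos_pos)
    finally show ?thesis .
  qed
  then show ?thesis
    using that w by blast
qed

theorem lemma4p14:
  fixes n :: nat and M :: "nat \<Rightarrow> nat \<Rightarrow> real"
  assumes "is_egcm n M"
    and "n \<ge> 3"
    and "\<exists>\<sigma>. bij_betw \<sigma> {..<n} {..<n} \<and>
           (\<forall>i<n. \<forall>j<n. egcm_adj n M (\<sigma> i) (\<sigma> j) \<longleftrightarrow>
                        (j = Suc i mod n \<or> i = Suc j mod n))"
    and "\<forall>i j. egcm_adj n M i j \<longrightarrow> M i j * M j i = 1"
  shows "\<not> admissible n M"
proof -
  obtain \<sigma> where bij: "bij_betw \<sigma> {..<n} {..<n}" and adj: "\<And>p k. p < n \<Longrightarrow> k < n \<Longrightarrow>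
      egcm_adj n M (\<sigma> p) (\<sigma> k) \<longleftrightarrow> (k = Suc p mod n \<or> p = Suc k mod n)"
    using assms(3) by blast
  have diag: "\<And>i. i < n \<Longrightarrow> M i i = 2"
    and off_diag: "\<And>i j. i < n \<Longrightarrow> j < n \<Longrightarrow> i \<noteq> j \<Longrightarrow> M i j \<le> 0"
    using assms(1) unfolding is_egcm_def by auto
  have \<sigma>: "\<sigma> p < n" "\<sigma> p = \<sigma> k \<longleftrightarrow> p = k" if "p < n" "k < n" for p k
    using bij that by (auto simp: bij_betw_def inj_on_eq_iff)
  obtain w where "\<And>k. k < n \<Longrightarrow> w k > 0"
    "\<And>p. p < n \<Longrightarrow> (\<Sum>k<n. M (\<sigma> p) (\<sigma> k) * w k) \<le> 0"
  proof (rule loop_pos_vector[OF \<open>n \<ge> 3\<close>, of "\<lambda>p k. M (\<sigma> p) (\<sigma> k)"])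
    fix p assume p: "p < n"
    then have edge: "egcm_adj n M (\<sigma> p) (\<sigma> (Suc p mod n))"
      using adj by simp
    show "M (\<sigma> p) (\<sigma> p) = 2"
      using diag \<sigma> p by simp
    show "M (\<sigma> p) (\<sigma> (Suc p mod n)) < 0"
      using off_diag[of "\<sigma> p" "\<sigma> (Suc p mod n)"] edge unfolding egcm_adj_def by fastforce
    show "M (\<sigma> p) (\<sigma> (Suc p mod n)) * M (\<sigma> (Suc p mod n)) (\<sigma> p) = 1"
      using edge assms(4) by blast
  next
    fix p k assume "p < n" "k < n" "M (\<sigma> p) (\<sigma> k) \<noteq> 0"
    then show "k = p \<or> k = Suc p mod n \<or> p = Suc k mod n"
      using adj \<sigma> by (auto simp: egcm_adj_def)
  qed blast
  then show ?thesis
    using not_admissible_if_pos_vector_relabelled[OF bij] by blast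
qed

end
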